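(* Let $q$ be a prime number, $l\ge 2$ an integer, and $\alpha=\alpha_1/\alpha_2\in\mathbb{Q}\text{-}\mathcal{KS}(q^{l})$ with $\gcd(\alpha_1,q)=1$. Then $$1+q-q^{l-1}\le\alpha\le q^{l-1}+q-1.$$
   Context: Every nonzero rational $\alpha$ is written $\alpha=\alpha_1/\alpha_2$ with $\alpha_1\in\mathbb{Z}$, $\alpha_2$ a positive integer and $\gcd(\alpha_1,\alpha_2)=1$. For an integer $N\ge 2$ and a nonzero rational $\alpha=\alpha_1/\alpha_2$, $N$ is called an $\alpha$-Korselt number if $N\neq\alpha$ and $\alpha_2p-\alpha_1$ divides $\alpha_2N-\alpha_1$ (in $\mathbb{Z}$) for every prime divisor $p$ of $N$. $\mathbb{Q}\text{-}\mathcal{KS}(N)$ is the set of all $\beta\in\mathbb{Q}\setminus\{0,N\}$ such that $N$ is a $\beta$-Korselt number. *)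

theory Defs
  imports Complex_Main "HOL-Computational_Algebra.Primes"
begin

definition rat_num :: "rat \<Rightarrow> int" where "rat_num a = fst (quotient_of a)"
definition rat_den :: "rat \<Rightarrow> int" where "rat_den a = snd (quotient_of a)"

definition korselt :: "nat \<Rightarrow> rat \<Rightarrow> bool" where
  "korselt N \<alpha> \<longleftrightarrow> N \<ge> 2 \<and> \<alpha> \<noteq> 0 \<and> \<alpha> \<noteq> of_nat N \<and>
     (\<forall>p. prime p \<and> p dvd N \<longrightarrow>
        (rat_den \<alpha> * int p - rat_num \<alpha>) dvd (rat_den \<alpha> * int N - rat_num \<alpha>))"

definition QKS :: "nat \<Rightarrow> rat set" where
  "QKS N = {\<beta>. \<beta> \<noteq> 0 \<and> \<beta> \<noteq> of_nat N \<and> korselt N \<beta>}"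

end

theory Submission
  imports Defs
begin

text \<open>Write \<open>\<alpha> = a / b\<close> in lowest terms and put \<open>d = b q - a\<close>. The Korselt condition at
  the prime \<open>q\<close> says \<open>d\<close> divides \<open>(b q^l - a) - d = b q (q^(l-1) - 1)\<close>. A common divisor of
  \<open>d\<close> and \<open>b\<close> or \<open>q\<close> would divide \<open>a\<close>, so \<open>d\<close> divides \<open>q^(l-1) - 1\<close>, whence
  \<open>|\<alpha> - q| = |d| / b \<le> q^(l-1) - 1\<close>.\<close>

lemma rat_den_pos: "rat_den \<alpha> > 0"
  unfolding rat_den_def by (rule quotient_of_denom_pos')

lemma coprime_rat_num_den: "coprime (rat_num \<alpha>) (rat_den \<alpha>)"
  unfolding rat_num_def rat_den_def by (rule quotient_of_coprime) simp

lemma rat_num_div_den: "\<alpha> = of_int (rat_num \<alpha>) / of_int (rat_den \<alpha>)"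
  unfolding rat_num_def rat_den_def by (rule quotient_of_div) simp

lemma coprime_dvd_diff_left_iff:
  fixes a m x :: "'a :: ring_gcd"
  assumes "x dvd m"
  shows "coprime (m - a) x \<longleftrightarrow> coprime a x"
proof -
  obtain k where "m = k * x" using assms by (metis dvd_def mult.commute)
  then have "coprime (m - a) x \<longleftrightarrow> coprime x (k * x + - a)"
    by (simp add: coprime_commute)
  also have "\<dots> \<longleftrightarrow> coprime x (- a)"
    by (simp only: coprime_iff_gcd_eq_1 gcd_add_mult)
  finally show ?thesis by (simp add: coprime_commute)
qed

lemma korselt_dvd_diff:
  assumes "korselt N \<alpha>" and "prime p" and "p dvd N"
  shows "(rat_den \<alpha> * int p - rat_num \<alpha>) dvd (int N - int p)"
proof -
  let ?a = "rat_num \<alpha>" and ?b = "rat_den \<alpha>"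
  let ?d = "?b * int p - ?a"
  have "?d dvd ?b * int N - ?a"
    using assms unfolding korselt_def by blast
  moreover have "(?b * int N - ?a) - ?d = ?b * (int N - int p)"
    by (simp add: algebra_simps)
  ultimately have "?d dvd ?b * (int N - int p)"
    by (metis dvd_diff dvd_refl)
  moreover have "coprime ?d ?b"
    using coprime_rat_num_den by (subst coprime_dvd_diff_left_iff) simp_all
  ultimately show ?thesis using coprime_dvd_mult_right_iff by blast
qed

lemma korselt_dvd_cofactor_minus_one:
  assumes "korselt (p * M) \<alpha>" and "prime p" and "coprime (rat_num \<alpha>) (int p)"
  shows "(rat_den \<alpha> * int p - rat_num \<alpha>) dvd (int M - 1)"
proof -
  let ?d = "rat_den \<alpha> * int p - rat_num \<alpha>"
  have "?d dvd int (p * M) - int p"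
    using korselt_dvd_diff[OF assms(1,2)] by simp
  moreover have "int (p * M) - int p = int p * (int M - 1)"
    by (simp add: algebra_simps)
  ultimately have "?d dvd int p * (int M - 1)" by simp
  moreover have "coprime ?d (int p)"
    using assms(3) by (subst coprime_dvd_diff_left_iff) simp_all
  ultimately show ?thesis using coprime_dvd_mult_right_iff by blast
qed

lemma abs_diff_le_if_den_mult_diff_dvd:
  assumes "(rat_den \<alpha> * c - rat_num \<alpha>) dvd m" and "m \<noteq> 0"
  shows "\<bar>\<alpha> - of_int c\<bar> \<le> of_int \<bar>m\<bar>"
proof -
  let ?a = "rat_num \<alpha>" and ?b = "rat_den \<alpha>"
  have b_pos: "?b > 0" by (rule rat_den_pos)
  have "\<bar>\<alpha> - of_int c\<bar> = of_int \<bar>?b * c - ?a\<bar> / of_int ?b"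
    using b_pos by (subst rat_num_div_den) (simp add: field_simps abs_minus_commute)
  also have "\<dots> \<le> of_int \<bar>?b * c - ?a\<bar>"
    using b_pos by (simp add: divide_le_eq mult_le_cancel_left1)
  also have "\<dots> \<le> of_int \<bar>m\<bar>"
    using dvd_imp_le_int[OF assms(2,1)] by (simp only: of_int_le_iff)
  finally show ?thesis .
qed

theorem proposition2p4:
  fixes q l :: nat and \<alpha> :: rat
  assumes "prime q" and "l \<ge> 2" and "\<alpha> \<in> QKS (q ^ l)"
    and "gcd (rat_num \<alpha>) (int q) = 1"
  shows "1 + of_nat q - of_nat q ^ (l - 1) \<le> \<alpha> \<and> \<alpha> \<le> of_nat q ^ (l - 1) + of_nat q - 1"
proof -
  define M where "M = q ^ (l - 1)"
  have "q ^ l = q * M"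
    using assms(2) unfolding M_def by (simp flip: power_Suc)
  then have "korselt (q * M) \<alpha>"
    using assms(3) unfolding QKS_def by simp
  then have "(rat_den \<alpha> * int q - rat_num \<alpha>) dvd (int M - 1)"
    using assms(1,4) by (intro korselt_dvd_cofactor_minus_one) (simp_all add: coprime_iff_gcd_eq_1)
  moreover have "M \<ge> 2"
  proof -
    have "q ^ 1 \<le> M"
      unfolding M_def using assms(1,2) prime_ge_1_nat by (intro power_increasing) auto
    then show ?thesis using prime_ge_2_nat[OF assms(1)] by simp
  qed
  ultimately have "\<bar>\<alpha> - of_int (int q)\<bar> \<le> of_int \<bar>int M - 1\<bar>"
    by (intro abs_diff_le_if_den_mult_diff_dvd) auto
  also have "\<dots> = of_nat M - 1"
    using \<open>M \<ge> 2\<close> by simp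
  finally show ?thesis
    unfolding M_def abs_le_iff of_nat_power by linarith
qed

end
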